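(* For every integer $g\ge 0$, let $n'_g$ denote the number of gapsets of genus $g$ and depth at most $3$. Then for all $g \ge 2$, $n'_g \ge n'_{g-1}+n'_{g-2}$.
   Context: A gapset is a finite set $G \subset \mathbb{N}_+=\{1,2,3,\dots\}$ such that for all $z \in G$, whenever $z=x+y$ with $x,y\in\mathbb{N}_+$, we have $x\in G$ or $y\in G$. The multiplicity of $G$ is the least $m\ge 1$ with $m\notin G$; its conductor is $c=\max G+1$ (with $c=0$ if $G=\emptyset$); its genus is $|G|$; its depth is $\lceil c/m\rceil$. *)

theory Defs
  imports Complex_Main
begin

definition gapset :: "nat set \<Rightarrow> bool" where
  "gapset G \<longleftrightarrow> finite G \<and> 0 \<notin> G \<and>
     (\<forall>z\<in>G. \<forall>x y. x > 0 \<and> y > 0 \<and> z = x + y \<longrightarrow> x \<in> G \<or> y \<in> G)"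

definition multiplicity_gs :: "nat set \<Rightarrow> nat" where
  "multiplicity_gs G = (LEAST m. m \<ge> 1 \<and> m \<notin> G)"

definition conductor_gs :: "nat set \<Rightarrow> nat" where
  "conductor_gs G = (if G = {} then 0 else Max G + 1)"

definition genus_gs :: "nat set \<Rightarrow> nat" where
  "genus_gs G = card G"

definition depth_gs :: "nat set \<Rightarrow> int" where
  "depth_gs G = ceiling ((of_nat (conductor_gs G) :: rat) / of_nat (multiplicity_gs G))"

definition n_depth3 :: "nat \<Rightarrow> nat" where
  "n_depth3 g = card {G. gapset G \<and> genus_gs G = g \<and> depth_gs G \<le> 3}"

end

theory Submission
  imports Defs
begin

text \<open>Let G be a gapset of depth at most 3 and multiplicity m, so G lies below 3m.
  Opening a new gap in front of m and in front of 2m, i.e. shifting [m, 2m) up by 1 and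
  [2m, 3m) up by 2, and adding m to the gapset gives a gapset of multiplicity m + 1, depth
  at most 3 and genus one larger; adding also 2m + 1 gives genus two larger.  Both maps are
  injective, and their images are disjoint since 2m + 1 is a gap only in the second one.
  Hence they inject the gapsets of genus g - 1 and g - 2 disjointly into those of genus g.\<close>

lemma card_add_le_of_inj_on_disjoint:
  assumes "finite C"
    and "inj_on f A" "f ` A \<subseteq> C" and "inj_on h B" "h ` B \<subseteq> C"
    and "f ` A \<inter> h ` B = {}"
  shows "card A + card B \<le> card C"
proof -
  have "card A + card B = card (f ` A) + card (h ` B)"
    using assms(2,4) by (simp add: card_image)
  also have "\<dots> = card (f ` A \<union> h ` B)"
    using assms by (intro card_Un_disjoint[symmetric]) (auto intro: finite_subset)
  also have "\<dots> \<le> card C"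
    using assms by (intro card_mono) auto
  finally show ?thesis .
qed

lemma gapsetD:
  assumes "gapset G"
  shows "finite G" "0 \<notin> G"
    and "\<And>x y. x + y \<in> G \<Longrightarrow> 0 < x \<Longrightarrow> 0 < y \<Longrightarrow> x \<in> G \<or> y \<in> G"
  using assms unfolding gapset_def by blast+

lemma multiplicity_gs_pos_notin:
  assumes "finite G"
  shows "1 \<le> multiplicity_gs G" "multiplicity_gs G \<notin> G"
proof -
  obtain k where "k \<notin> insert 0 G"
    using ex_new_if_finite[OF infinite_UNIV_nat] assms by blast
  then have "\<exists>k. 1 \<le> k \<and> k \<notin> G" by (intro exI[of _ k]) auto
  from LeastI_ex[OF this] show "1 \<le> multiplicity_gs G" "multiplicity_gs G \<notin> G"
    unfolding multiplicity_gs_def by auto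
qed

lemma less_multiplicity_gs_in:
  "1 \<le> x \<Longrightarrow> x < multiplicity_gs G \<Longrightarrow> x \<in> G"
  unfolding multiplicity_gs_def using not_less_Least by blast

lemma multiplicity_gs_eqI:
  assumes "1 \<le> m" "m \<notin> G" "\<And>x. 1 \<le> x \<Longrightarrow> x < m \<Longrightarrow> x \<in> G"
  shows "multiplicity_gs G = m"
  unfolding multiplicity_gs_def using assms by (intro Least_equality) (auto simp: not_le[symmetric])

lemma multiplicity_gs_le_card:
  assumes "finite G"
  shows "multiplicity_gs G \<le> card G + 1"
proof -
  have "{1..<multiplicity_gs G} \<subseteq> G"
    using less_multiplicity_gs_in by auto
  then have "card {1..<multiplicity_gs G} \<le> card G"
    using assms by (rule card_mono[rotated])
  then show ?thesis by simp
qed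

lemma depth_gs_le_iff:
  assumes "finite G"
  shows "depth_gs G \<le> int k \<longleftrightarrow> (\<forall>x\<in>G. x < k * multiplicity_gs G)"
proof -
  define m where "m = multiplicity_gs G"
  have "1 \<le> m"
    using multiplicity_gs_pos_notin(1)[OF assms] by (simp add: m_def)
  then have "depth_gs G \<le> int k \<longleftrightarrow> conductor_gs G \<le> k * m"
    unfolding depth_gs_def m_def[symmetric] ceiling_le_iff
    by (simp add: divide_le_eq flip: of_nat_mult)
  also have "\<dots> \<longleftrightarrow> (\<forall>x\<in>G. x < k * m)"
    using assms by (cases "G = {}") (auto simp: conductor_gs_def Suc_le_eq)
  finally show ?thesis by (simp add: m_def)
qed

definition stretch :: "nat \<Rightarrow> nat \<Rightarrow> nat" where
  "stretch m x = (if x < m then x else if x < 2 * m then x + 1 else x + 2)"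

definition lift1 :: "nat set \<Rightarrow> nat set" where
  "lift1 G = insert (multiplicity_gs G) (stretch (multiplicity_gs G) ` G)"

definition lift2 :: "nat set \<Rightarrow> nat set" where
  "lift2 G = insert (2 * multiplicity_gs G + 1) (lift1 G)"

lemma inj_stretch: "inj (stretch m)"
  by (rule injI) (auto simp: stretch_def split: if_splits)

lemma stretch_neq [simp]: "stretch m x \<noteq> m" "stretch m x \<noteq> Suc (2 * m)"
  by (auto simp: stretch_def)

lemma vimage_stretch_lift1: "stretch (multiplicity_gs G) -` lift1 G = G"
  by (auto simp: lift1_def inj_eq[OF inj_stretch])

lemma vimage_stretch_lift2: "stretch (multiplicity_gs G) -` lift2 G = G"
  using vimage_stretch_lift1 by (auto simp: lift2_def)

lemma Suc_double_multiplicity_gs_notin_lift1: "2 * multiplicity_gs G + 1 \<notin> lift1 G"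
  by (auto simp: lift1_def) (metis stretch_neq(2))

lemma card_lift1:
  assumes "finite G"
  shows "card (lift1 G) = card G + 1"
proof -
  have "multiplicity_gs G \<notin> stretch (multiplicity_gs G) ` G"
    using stretch_neq(1) by (metis imageE)
  then show ?thesis
    using assms by (simp add: lift1_def card_image inj_on_subset[OF inj_stretch])
qed

lemma card_lift2:
  assumes "finite G"
  shows "card (lift2 G) = card G + 2"
  using assms card_lift1 Suc_double_multiplicity_gs_notin_lift1
  by (simp add: lift2_def lift1_def)

lemma multiplicity_gs_lift1:
  assumes "finite G"
  shows "multiplicity_gs (lift1 G) = multiplicity_gs G + 1"
proof (rule multiplicity_gs_eqI)
  define m where "m = multiplicity_gs G"
  have "m \<notin> G" "1 \<le> m"
    using multiplicity_gs_pos_notin[OF assms] by (simp_all add: m_def)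
  then show "m + 1 \<notin> lift1 G"
    by (auto simp: lift1_def stretch_def m_def[symmetric] split: if_splits)
  show "\<And>x. 1 \<le> x \<Longrightarrow> x < m + 1 \<Longrightarrow> x \<in> lift1 G"
    using less_multiplicity_gs_in
    by (force simp: lift1_def stretch_def m_def[symmetric] less_Suc_eq)
qed simp

lemma gapset_lift1:
  assumes "gapset G" and below_3m: "\<forall>x\<in>G. x < 3 * multiplicity_gs G"
  shows "gapset (lift1 G)"
proof -
  define m where "m = multiplicity_gs G"
  note G = gapsetD[OF assms(1)]
  have "1 \<le> m"
    using multiplicity_gs_pos_notin(1)[OF G(1)] by (simp add: m_def)
  have low: "x \<in> lift1 G" if "1 \<le> x" "x \<le> m" for x
    using less_multiplicity_gs_in[of x "lift1 G"] multiplicity_gs_lift1[OF G(1)] that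
    by (simp add: m_def)
  have unshift: "a \<in> lift1 G" if "a - 1 \<in> G" "m < a" "a \<le> 2 * m" for a
  proof -
    have "stretch m (a - 1) = a"
      using that by (auto simp: stretch_def)
    then show ?thesis
      using that(1) by (force simp: lift1_def m_def[symmetric])
  qed
  have closed: "x \<in> lift1 G \<or> y \<in> lift1 G"
    if sum: "x + y \<in> lift1 G" and pos: "0 < x" "0 < y" for x y
  proof (cases "x \<le> m \<or> y \<le> m")
    case True
    then show ?thesis
      using low pos by fastforce
  next
    case False
    \<comment> \<open>then x + y > 2m + 1, so it is w + 2 for some w in G, and w = (x - 1) + (y - 1)\<close>
    obtain w where w: "w \<in> G" "x + y = stretch m w"
      using sum False by (auto simp: lift1_def m_def[symmetric])
    have "w < 3 * m"
      using below_3m w(1) by (simp add: m_def)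
    then have "w = (x - 1) + (y - 1)" "x - 1 < 2 * m" "y - 1 < 2 * m"
      using w(2) False by (auto simp: stretch_def split: if_splits)
    then have "x - 1 \<in> G \<or> y - 1 \<in> G"
      using G(3)[of "x - 1" "y - 1"] w(1) False \<open>1 \<le> m\<close> by auto
    then show ?thesis
      using unshift False \<open>x - 1 < 2 * m\<close> \<open>y - 1 < 2 * m\<close> by fastforce
  qed
  have "0 \<notin> lift1 G"
    using G(2) \<open>1 \<le> m\<close> by (auto simp: lift1_def stretch_def m_def[symmetric] split: if_splits)
  moreover have "finite (lift1 G)"
    using G(1) by (simp add: lift1_def)
  ultimately show ?thesis
    unfolding gapset_def using closed by blast
qed

lemma multiplicity_gs_insert:
  assumes "finite H" "z \<noteq> multiplicity_gs H"
  shows "multiplicity_gs (insert z H) = multiplicity_gs H"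
  using multiplicity_gs_pos_notin[OF assms(1)] less_multiplicity_gs_in assms(2)
  by (intro multiplicity_gs_eqI) auto

lemma gapset_insert_less_double_multiplicity:
  assumes "gapset H" "0 < z" "z < 2 * multiplicity_gs H"
  shows "gapset (insert z H)"
proof -
  note H = gapsetD[OF assms(1)]
  have "x \<in> H \<or> y \<in> H" if "z = x + y" "0 < x" "0 < y" for x y
    using less_multiplicity_gs_in[of x H] less_multiplicity_gs_in[of y H] that assms(3)
    by linarith
  then show ?thesis
    using H assms(2) unfolding gapset_def by blast
qed

lemma multiplicity_gs_lift2:
  assumes "finite G"
  shows "multiplicity_gs (lift2 G) = multiplicity_gs G + 1"
  using assms multiplicity_gs_pos_notin(1)[OF assms] multiplicity_gs_lift1[OF assms]
    multiplicity_gs_insert[of "lift1 G"]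
  by (simp add: lift2_def lift1_def)

lemma gapset_lift2:
  assumes "gapset G" "\<forall>x\<in>G. x < 3 * multiplicity_gs G"
  shows "gapset (lift2 G)"
  using gapset_insert_less_double_multiplicity[OF gapset_lift1[OF assms]]
    multiplicity_gs_lift1[OF gapsetD(1)[OF assms(1)]]
  by (simp add: lift2_def)

lemma lift2_below_triple:
  assumes "\<forall>x\<in>G. x < 3 * multiplicity_gs G"
  shows "\<forall>x\<in>lift2 G. x < 3 * (multiplicity_gs G + 1)"
  using assms by (auto simp: lift2_def lift1_def stretch_def)

lemma inj_on_lift1: "inj_on lift1 {G :: nat set. finite G}"
proof (rule inj_on_inverseI)
  fix G assume "G \<in> {G :: nat set. finite G}"
  then show "stretch (multiplicity_gs (lift1 G) - 1) -` lift1 G = G"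
    using multiplicity_gs_lift1 vimage_stretch_lift1 by simp
qed

lemma inj_on_lift2: "inj_on lift2 {G :: nat set. finite G}"
proof (rule inj_on_inverseI)
  fix G assume "G \<in> {G :: nat set. finite G}"
  then show "stretch (multiplicity_gs (lift2 G) - 1) -` lift2 G = G"
    using multiplicity_gs_lift2 vimage_stretch_lift2 by simp
qed

lemma lift1_neq_lift2:
  assumes "finite G" "finite G'"
  shows "lift1 G \<noteq> lift2 G'"
proof
  assume eq: "lift1 G = lift2 G'"
  then have "multiplicity_gs G = multiplicity_gs G'"
    using multiplicity_gs_lift1[OF assms(1)] multiplicity_gs_lift2[OF assms(2)] by simp
  then have "2 * multiplicity_gs G + 1 \<in> lift1 G"
    using eq by (simp add: lift2_def)
  then show False
    using Suc_double_multiplicity_gs_notin_lift1 by blast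
qed

definition gapsets_depth3 :: "nat \<Rightarrow> nat set set" where
  "gapsets_depth3 g = {G. gapset G \<and> genus_gs G = g \<and> depth_gs G \<le> 3}"

lemma n_depth3_eq_card: "n_depth3 g = card (gapsets_depth3 g)"
  unfolding n_depth3_def gapsets_depth3_def ..

lemma gapsets_depth3_iff:
  "G \<in> gapsets_depth3 g \<longleftrightarrow>
     gapset G \<and> card G = g \<and> (\<forall>x\<in>G. x < 3 * multiplicity_gs G)"
  using depth_gs_le_iff[of G 3] gapsetD(1)[of G]
  unfolding gapsets_depth3_def genus_gs_def by auto

lemma finite_gapsets_depth3: "finite (gapsets_depth3 g)"
proof (rule finite_subset)
  show "gapsets_depth3 g \<subseteq> Pow {..<3 * (g + 1)}"
  proof
    fix G assume "G \<in> gapsets_depth3 g"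
    then have "gapset G" "card G = g" "\<forall>x\<in>G. x < 3 * multiplicity_gs G"
      by (simp_all add: gapsets_depth3_iff)
    moreover have "multiplicity_gs G \<le> card G + 1"
      using multiplicity_gs_le_card gapsetD(1) \<open>gapset G\<close> by blast
    ultimately show "G \<in> Pow {..<3 * (g + 1)}"
      by (auto intro: less_le_trans)
  qed
qed simp

lemma lift1_mem_gapsets_depth3:
  "G \<in> gapsets_depth3 g \<Longrightarrow> lift1 G \<in> gapsets_depth3 (g + 1)"
  using gapset_lift1 card_lift1 lift2_below_triple multiplicity_gs_lift1 gapsetD(1)
  by (auto simp: gapsets_depth3_iff lift2_def)

lemma lift2_mem_gapsets_depth3:
  "G \<in> gapsets_depth3 g \<Longrightarrow> lift2 G \<in> gapsets_depth3 (g + 2)"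
  using gapset_lift2 card_lift2 lift2_below_triple multiplicity_gs_lift2 gapsetD(1)
  by (auto simp: gapsets_depth3_iff)

theorem mainTheorem2:
  fixes g :: nat
  assumes "g \<ge> 2"
  shows "n_depth3 g \<ge> n_depth3 (g - 1) + n_depth3 (g - 2)"
proof -
  define k where "k = g - 2"
  have g: "g = k + 2"
    using assms by (simp add: k_def)
  have "card (gapsets_depth3 (k + 1)) + card (gapsets_depth3 k) \<le> card (gapsets_depth3 (k + 2))"
  proof (rule card_add_le_of_inj_on_disjoint)
    show "lift1 ` gapsets_depth3 (k + 1) \<subseteq> gapsets_depth3 (k + 2)"
      using lift1_mem_gapsets_depth3[of _ "k + 1"] by auto
    show "lift2 ` gapsets_depth3 k \<subseteq> gapsets_depth3 (k + 2)"
      using lift2_mem_gapsets_depth3 by auto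
    show "inj_on lift1 (gapsets_depth3 (k + 1))" "inj_on lift2 (gapsets_depth3 k)"
      by (auto intro: inj_on_subset[OF inj_on_lift1] inj_on_subset[OF inj_on_lift2]
          simp: gapsets_depth3_iff gapsetD(1))
    show "lift1 ` gapsets_depth3 (k + 1) \<inter> lift2 ` gapsets_depth3 k = {}"
      using lift1_neq_lift2 by (fastforce simp: gapsets_depth3_iff gapsetD(1))
  qed (rule finite_gapsets_depth3)
  then show ?thesis
    by (simp add: n_depth3_eq_card g)
qed

end
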